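(* Let $N=1$ and assume (H-EL) and (H-R). For $M>0$ let $u_M$ be a minimizer of $E$ in $\mathcal D_M$, even about $0$. Then $u_M(0)\to0$ as $M\to0^+$.
   Context: Hypothesis (H-EL): $Q\in C^1((0,+\infty))$, $Q\equiv0$ on $(-\infty,0]$, $\inf Q>-\infty$, $Q(u)\sim Au^{1-m}$ as $u\to0^+$ with $A>0$, $1<m<3$, and $|sQ'(s)|\le CQ(s)$ for small $s>0$. $R(s)=Q(s)/s$. (H-R): $R'\ne0$ on $(0,\delta)\cup(\delta^{-1},\infty)$ for some $\delta\in(0,1)$. $E[u]=\int_{\mathbb{R}}(\tfrac12(u')^2+Q(u))$, $\mathcal D_M=\{u\in H^1(\mathbb{R}):u\ge0,\int u=M\}$. *)

theory Defs
  imports "HOL-Analysis.Analysis" "HOL-Library.Landau_Symbols"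
begin

text \<open>H^1(R) functions on the line, represented by their continuous representative:
  u is square integrable and u(b) - u(a) is the integral over [a,b] of a square-integrable
  weak derivative g.\<close>

definition is_weak_deriv :: "(real \<Rightarrow> real) \<Rightarrow> (real \<Rightarrow> real) \<Rightarrow> bool" where
  "is_weak_deriv u g \<longleftrightarrow> g \<in> borel_measurable lborel \<and> integrable lborel (\<lambda>x. (g x)\<^sup>2) \<and>
     (\<forall>a b. a \<le> b \<longrightarrow> u b - u a = (LBINT t=a..b. g t))"

definition H1 :: "(real \<Rightarrow> real) set" where
  "H1 = {u. u \<in> borel_measurable lborel \<and> integrable lborel (\<lambda>x. (u x)\<^sup>2) \<and> (\<exists>g. is_weak_deriv u g)}"

definition wderiv :: "(real \<Rightarrow> real) \<Rightarrow> real \<Rightarrow> real" where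
  "wderiv u = (SOME g. is_weak_deriv u g)"

definition ext_integral :: "(real \<Rightarrow> real) \<Rightarrow> ereal" where
  "ext_integral f = enn2ereal (\<integral>\<^sup>+ x. ennreal (max 0 (f x)) \<partial>lborel)
                  - enn2ereal (\<integral>\<^sup>+ x. ennreal (max 0 (- f x)) \<partial>lborel)"

definition energy :: "(real \<Rightarrow> real) \<Rightarrow> (real \<Rightarrow> real) \<Rightarrow> ereal" where
  "energy Q u = ext_integral (\<lambda>x. (1/2) * (wderiv u x)\<^sup>2 + Q (u x))"

definition DM :: "real \<Rightarrow> (real \<Rightarrow> real) set" where
  "DM M = {u \<in> H1. (\<forall>x. u x \<ge> 0) \<and> integrable lborel u \<and> (\<integral>x. u x \<partial>lborel) = M}"

definition is_minimizer :: "(real \<Rightarrow> real) \<Rightarrow> real \<Rightarrow> (real \<Rightarrow> real) \<Rightarrow> bool" where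
  "is_minimizer Q M u \<longleftrightarrow> u \<in> DM M \<and> (\<forall>v\<in>DM M. energy Q u \<le> energy Q v)"

end

(*
  For u in D_M the value h = u(x0) is controlled by the mass and the Dirichlet integral:
  u must fall to h/2 within distance 4M/h of x0 (otherwise its mass would exceed M), and
  by the AM-GM inequality such a drop costs Dirichlet energy, so h^3 <= 16 M \<integral>u'^2.
  Since Q is bounded below and nonnegative near 0, Q(s) >= -c s, hence
  E[u] >= 1/2 \<integral>u'^2 - c M.  Comparing a minimizer with the test function
  a (t (1 - t))^p at t = x/l, where p = 2/(m+1), a = M^(2/(m+3)) and l is fixed by the mass
  constraint, gives E[u_M] <= C M^k with k = (3-m)/(m+3) > 0.  Together,
  u_M(0)^3 <= 16 M (2 C M^k + 2 c M), which tends to 0.  Only the lower bound of Q, its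
  measurability and its behaviour near 0 enter.
*)
theory Submission
  imports Defs
begin

section \<open>Weak derivatives\<close>

lemma set_integrable_if_square_integrable:
  fixes g :: "real \<Rightarrow> real"
  assumes [measurable]: "g \<in> borel_measurable lborel" and "integrable lborel (\<lambda>x. (g x)\<^sup>2)"
    and [measurable]: "S \<in> sets lborel" and "emeasure lborel S < \<infinity>"
  shows "set_integrable lborel S g"
  unfolding set_integrable_def
proof (rule Bochner_Integration.integrable_bound[of _ "\<lambda>x. indicator S x + (g x)\<^sup>2"])
  show "integrable lborel (\<lambda>x. indicator S x + (g x)\<^sup>2)"
    using assms by (intro Bochner_Integration.integrable_add integrable_real_indicator) auto
  show "AE x in lborel. norm (indicat_real S x *\<^sub>R g x) \<le> norm (indicator S x + (g x)\<^sup>2)"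
  proof
    fix x
    have "0 \<le> (\<bar>g x\<bar> - 1)\<^sup>2" by simp
    hence "\<bar>g x\<bar> \<le> 1 + (g x)\<^sup>2"
      by (simp add: power2_eq_square algebra_simps abs_mult_self_eq)
    thus "norm (indicat_real S x *\<^sub>R g x) \<le> norm (indicator S x + (g x)\<^sup>2)"
      by (cases "x \<in> S") auto
  qed
qed simp

lemma AE_zero_if_tail_integrals_zero:
  fixes f :: "real \<Rightarrow> real"
  assumes f: "integrable lborel f" and tail: "\<And>x. (\<integral>y. indicator {x<..} y * f y \<partial>lborel) = 0"
  shows "AE x in lborel. f x = 0"
proof -
  define P where "P x = max 0 (f x)" for x
  define N where "N x = max 0 (- f x)" for x
  have P: "integrable lborel P" and N: "integrable lborel N"
    unfolding P_def[abs_def] N_def[abs_def] using f by auto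
  have P_nonneg: "P y \<ge> 0" and N_nonneg: "N y \<ge> 0" for y
    by (simp_all add: P_def N_def)
  have tail_PN: "(\<integral>y. indicator {x<..} y * P y \<partial>lborel) = (\<integral>y. indicator {x<..} y * N y \<partial>lborel)" for x
  proof -
    have "f y = P y - N y" for y by (simp add: P_def N_def max_def)
    hence "(\<integral>y. indicator {x<..} y * f y \<partial>lborel) =
           (\<integral>y. indicator {x<..} y * P y - indicator {x<..} y * N y \<partial>lborel)"
      by (simp add: right_diff_distrib)
    also have "\<dots> = (\<integral>y. indicator {x<..} y * P y \<partial>lborel) - (\<integral>y. indicator {x<..} y * N y \<partial>lborel)"
      by (intro Bochner_Integration.integral_diff integrable_mult_indicator[where 'b=real, simplified] P N) auto
    finally have "(\<integral>y. indicator {x<..} y * f y \<partial>lborel) = \<dots>" .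
    thus ?thesis using tail[of x] by simp
  qed
  have density_tail: "emeasure (density lborel (\<lambda>y. ennreal (h y))) {x<..} =
      ennreal (\<integral>y. indicator {x<..} y * h y \<partial>lborel)"
    if "integrable lborel h" "\<And>y. h y \<ge> 0" for h :: "real \<Rightarrow> real" and x :: real
  proof -
    have [measurable]: "h \<in> borel_measurable borel"
      using borel_measurable_integrable[OF that(1)] by simp
    have "emeasure (density lborel (\<lambda>y. ennreal (h y))) {x<..} =
        (\<integral>\<^sup>+y. ennreal (indicator {x<..} y * h y) \<partial>lborel)"
      by (subst emeasure_density) (auto intro!: nn_integral_cong simp: indicator_def)
    also have "\<dots> = ennreal (\<integral>y. indicator {x<..} y * h y \<partial>lborel)"
      using that by (intro nn_integral_eq_integral integrable_mult_indicator[where 'b=real, simplified])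
        (auto simp: indicator_def)
    finally show ?thesis .
  qed
  have "density lborel (\<lambda>y. ennreal (P y)) = density lborel (\<lambda>y. ennreal (N y))"
    by (rule measure_eqI_lessThan)
       (auto simp: density_tail[OF P P_nonneg] density_tail[OF N N_nonneg] tail_PN)
  hence "AE y in lborel. ennreal (P y) = ennreal (N y)"
    using P N by (intro sigma_finite_measure.density_unique[OF sigma_finite_lborel]) auto
  thus ?thesis
    by (rule AE_mp) (auto simp: P_def N_def max_def split: if_splits)
qed

lemma AE_zero_if_interval_integrals_zero:
  fixes f :: "real \<Rightarrow> real"
  assumes loc: "\<And>a b. set_integrable lborel {a<..b} f"
    and zero: "\<And>a b. a \<le> b \<Longrightarrow> set_lebesgue_integral lborel {a<..b} f = 0"
  shows "AE x in lborel. f x = 0"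
proof -
  have "AE x in lborel. indicator {- real n<..real n} x * f x = 0" for n :: nat
  proof (rule AE_zero_if_tail_integrals_zero)
    show "integrable lborel (\<lambda>x. indicator {- real n<..real n} x * f x)"
      using loc unfolding set_integrable_def by simp
    fix x :: real
    have "(\<lambda>y. indicator {x<..} y * (indicator {- real n<..real n} y * f y)) =
          (\<lambda>y. indicator {max x (- real n)<..real n} y * f y)"
      by (auto simp: indicator_def fun_eq_iff)
    moreover have "set_lebesgue_integral lborel {max x (- real n)<..real n} f = 0"
    proof (cases "x \<le> real n")
      case False
      hence "indicator {max x (- real n)<..real n} y = (0::real)" for y by (auto simp: indicator_def)
      thus ?thesis by (simp add: set_lebesgue_integral_def)
    qed (auto intro: zero)
    ultimately show "(\<integral>y. indicator {x<..} y * (indicator {- real n<..real n} y * f y) \<partial>lborel) = 0"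
      by (simp add: set_lebesgue_integral_def)
  qed
  hence "AE x in lborel. \<forall>n::nat. indicator {- real n<..real n} x * f x = 0"
    by (subst AE_all_countable) blast
  thus ?thesis
  proof (rule AE_mp, intro AE_I2 impI)
    fix x :: real assume vanish: "\<forall>n::nat. indicator {- real n<..real n} x * f x = 0"
    obtain n :: nat where "\<bar>x\<bar> < real n" using reals_Archimedean2 by blast
    hence "indicator {- real n<..real n} x = (1::real)" by (simp add: indicator_def abs_less_iff)
    thus "f x = 0" using vanish[rule_format, of n] by simp
  qed
qed

lemma is_weak_deriv_set_integrable:
  assumes "is_weak_deriv u g"
  shows "set_integrable lborel {a<..b} g"
proof (rule set_integrable_if_square_integrable)
  show "emeasure lborel {a<..b} < \<infinity>"
    by (cases "a \<le> b") auto
qed (use assms in \<open>auto simp: is_weak_deriv_def\<close>)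

lemma is_weak_deriv_AE_unique:
  assumes g: "is_weak_deriv u g" and h: "is_weak_deriv u h"
  shows "AE x in lborel. g x = h x"
proof -
  have "AE x in lborel. g x - h x = 0"
  proof (rule AE_zero_if_interval_integrals_zero)
    fix a b :: real
    show "set_integrable lborel {a<..b} (\<lambda>x. g x - h x)"
      using is_weak_deriv_set_integrable[OF g] is_weak_deriv_set_integrable[OF h]
      by (rule set_integral_diff(1))
    assume "a \<le> b"
    have "set_lebesgue_integral lborel {a<..b} (\<lambda>x. g x - h x) = (LBINT t=a..b. g t) - (LBINT t=a..b. h t)"
      using \<open>a \<le> b\<close> is_weak_deriv_set_integrable[OF g] is_weak_deriv_set_integrable[OF h]
      by (simp add: set_integral_diff(2) interval_integral_Ioc)
    also have "\<dots> = 0" using g h \<open>a \<le> b\<close> by (auto simp: is_weak_deriv_def)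
    finally show "set_lebesgue_integral lborel {a<..b} (\<lambda>x. g x - h x) = 0" .
  qed
  thus ?thesis by auto
qed

lemma is_weak_deriv_wderiv: "u \<in> H1 \<Longrightarrow> is_weak_deriv u (wderiv u)"
  unfolding H1_def wderiv_def by (metis (mono_tags) mem_Collect_eq someI_ex)

lemma is_weak_derivI:
  fixes u g :: "real \<Rightarrow> real"
  assumes cont: "continuous_on UNIV u" and "finite S"
    and deriv: "\<And>x. x \<notin> S \<Longrightarrow> (u has_real_derivative g x) (at x)"
    and [measurable]: "g \<in> borel_measurable lborel" and sq: "integrable lborel (\<lambda>x. (g x)\<^sup>2)"
  shows "is_weak_deriv u g"
  unfolding is_weak_deriv_def
proof (intro conjI allI impI)
  fix a b :: real assume "a \<le> b"
  have "(g has_integral u b - u a) {a..b}"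
    by (rule fundamental_theorem_of_calculus_interior_strong[OF \<open>finite S\<close> \<open>a \<le> b\<close>])
       (auto intro: continuous_on_subset[OF cont] deriv
             simp: has_real_derivative_iff_has_vector_derivative[symmetric])
  moreover have "set_integrable lborel {a..b} g"
    by (rule set_integrable_if_square_integrable) (use sq \<open>a \<le> b\<close> in auto)
  ultimately show "u b - u a = (LBINT t=a..b. g t)"
    using \<open>a \<le> b\<close> by (simp add: interval_integral_Icc set_borel_integral_eq_integral integral_unique)
qed (use sq in auto)

section \<open>The extended Lebesgue integral\<close>

lemma ext_integral_eq_integral:
  fixes f :: "real \<Rightarrow> real"
  assumes "integrable lborel f"
  shows "ext_integral f = ereal (\<integral>x. f x \<partial>lborel)"
proof -
  have pos: "integrable lborel (\<lambda>x. max 0 (f x))" and neg: "integrable lborel (\<lambda>x. max 0 (- f x))"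
    using assms by auto
  have "ext_integral f = ereal (\<integral>x. max 0 (f x) \<partial>lborel) - ereal (\<integral>x. max 0 (- f x) \<partial>lborel)"
    unfolding ext_integral_def using pos neg by (simp add: nn_integral_eq_integral)
  also have "\<dots> = ereal (\<integral>x. max 0 (f x) - max 0 (- f x) \<partial>lborel)"
    using pos neg by simp
  also have "(\<lambda>x. max 0 (f x) - max 0 (- f x)) = f"
    by (auto simp: fun_eq_iff max_def)
  finally show ?thesis .
qed

lemma integrable_if_ext_integral_parts_finite:
  fixes f :: "real \<Rightarrow> real"
  assumes "f \<in> borel_measurable lborel"
    and "(\<integral>\<^sup>+ x. ennreal (max 0 (f x)) \<partial>lborel) < \<infinity>"
    and "(\<integral>\<^sup>+ x. ennreal (max 0 (- f x)) \<partial>lborel) < \<infinity>"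
  shows "integrable lborel f"
  using assms by (simp add: real_integrable_def ennreal_max_0 less_top)

lemma nn_integral_pos_part_mono_AE:
  fixes f h :: "real \<Rightarrow> real"
  assumes "integrable lborel h" and "AE x in lborel. f x \<le> h x"
  shows "(\<integral>\<^sup>+ x. ennreal (max 0 (f x)) \<partial>lborel) < \<infinity>"
proof -
  have "(\<integral>\<^sup>+ x. ennreal (max 0 (f x)) \<partial>lborel) \<le> (\<integral>\<^sup>+ x. ennreal (max 0 (h x)) \<partial>lborel)"
    using assms(2) by (intro nn_integral_mono_AE) (auto elim!: eventually_mono intro: ennreal_leI)
  also have "\<dots> = ennreal (\<integral>x. max 0 (h x) \<partial>lborel)"
    using assms(1) by (intro nn_integral_eq_integral) auto
  finally show ?thesis by (simp add: le_less_trans)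
qed

lemma ext_integral_ge_integral:
  fixes f h :: "real \<Rightarrow> real"
  assumes [measurable]: "f \<in> borel_measurable lborel" and h: "integrable lborel h"
    and le: "AE x in lborel. h x \<le> f x"
  shows "ereal (\<integral>x. h x \<partial>lborel) \<le> ext_integral f"
proof -
  have neg: "(\<integral>\<^sup>+ x. ennreal (max 0 (- f x)) \<partial>lborel) < \<infinity>"
    using h le by (intro nn_integral_pos_part_mono_AE[of "\<lambda>x. - h x"]) (auto elim!: eventually_mono)
  show ?thesis
  proof (cases "(\<integral>\<^sup>+ x. ennreal (max 0 (f x)) \<partial>lborel) < \<infinity>")
    case True
    hence "integrable lborel f" using neg by (intro integrable_if_ext_integral_parts_finite) auto
    thus ?thesis using h le by (simp add: ext_integral_eq_integral integral_mono_AE)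
  next
    case False
    thus ?thesis by (simp add: ext_integral_def less_top[symmetric])
  qed
qed

lemma ext_integral_le_integral:
  fixes f h :: "real \<Rightarrow> real"
  assumes [measurable]: "f \<in> borel_measurable lborel" and h: "integrable lborel h"
    and le: "AE x in lborel. f x \<le> h x"
  shows "ext_integral f \<le> ereal (\<integral>x. h x \<partial>lborel)"
proof -
  have pos: "(\<integral>\<^sup>+ x. ennreal (max 0 (f x)) \<partial>lborel) < \<infinity>"
    using h le by (rule nn_integral_pos_part_mono_AE)
  show ?thesis
  proof (cases "(\<integral>\<^sup>+ x. ennreal (max 0 (- f x)) \<partial>lborel) < \<infinity>")
    case True
    hence "integrable lborel f" using pos by (intro integrable_if_ext_integral_parts_finite) auto
    thus ?thesis using h le by (simp add: ext_integral_eq_integral integral_mono_AE)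
  next
    case False
    moreover obtain p where "(\<integral>\<^sup>+ x. ennreal (max 0 (f x)) \<partial>lborel) = ennreal p" "p \<ge> 0"
      using pos by (cases rule: ennreal_cases) auto
    ultimately show ?thesis by (simp add: ext_integral_def less_top[symmetric])
  qed
qed

section \<open>Pointwise bound and lower energy bound\<close>

lemma DM_D:
  assumes "u \<in> DM M"
  shows "integrable lborel u" "u x \<ge> 0" "(\<integral>x. u x \<partial>lborel) = M"
    and "u \<in> borel_measurable lborel" "is_weak_deriv u (wderiv u)"
  using assms is_weak_deriv_wderiv by (auto simp: DM_def H1_def)

lemma exists_le_if_integral_less:
  fixes u :: "real \<Rightarrow> real"
  assumes u: "integrable lborel u" "\<And>x. u x \<ge> 0" and "T \<ge> 0"
    and less: "(\<integral>x. u x \<partial>lborel) < c * T"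
  shows "\<exists>x\<in>{x\<^sub>0..x\<^sub>0 + T}. u x \<le> c"
proof (rule ccontr)
  assume "\<not> ?thesis"
  hence above: "c < u x" if "x \<in> {x\<^sub>0..x\<^sub>0 + T}" for x
    using that by force
  have "c * T = (\<integral>x. indicator {x\<^sub>0..x\<^sub>0 + T} x * c \<partial>lborel)"
    using \<open>T \<ge> 0\<close> by simp
  also have "\<dots> \<le> (\<integral>x. indicator {x\<^sub>0..x\<^sub>0 + T} x * u x \<partial>lborel)"
  proof (rule integral_mono)
    show "integrable lborel (\<lambda>x. indicator {x\<^sub>0..x\<^sub>0 + T} x * c)"
      using \<open>T \<ge> 0\<close> by (intro integrable_mult_left integrable_real_indicator) auto
    show "integrable lborel (\<lambda>x. indicator {x\<^sub>0..x\<^sub>0 + T} x * u x)"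
      using u(1) by (intro integrable_mult_indicator[where 'b=real, simplified]) auto
  qed (use above in \<open>auto simp: indicator_def less_imp_le\<close>)
  also have "\<dots> \<le> (\<integral>x. u x \<partial>lborel)"
    using u by (intro integral_mono integrable_mult_indicator[where 'b=real, simplified])
       (auto simp: indicator_def)
  finally show False using less by simp
qed

lemma is_weak_deriv_drop_le:
  assumes g: "is_weak_deriv u g" and "x\<^sub>0 \<le> x" and "c > 0"
  shows "u x\<^sub>0 - u x \<le> (\<integral>t. (g t)\<^sup>2 \<partial>lborel) / (2 * c) + (x - x\<^sub>0) * c / 2"
proof -
  have sq: "integrable lborel (\<lambda>t. (g t)\<^sup>2)" using g by (simp add: is_weak_deriv_def)
  have "u x - u x\<^sub>0 = (\<integral>t. indicator {x\<^sub>0<..x} t * g t \<partial>lborel)"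
    using g \<open>x\<^sub>0 \<le> x\<close>
    by (simp add: is_weak_deriv_def interval_integral_Ioc set_lebesgue_integral_def)
  hence "u x\<^sub>0 - u x = (\<integral>t. indicator {x\<^sub>0<..x} t * (- g t) \<partial>lborel)"
    by simp
  also have "\<dots> \<le> (\<integral>t. (g t)\<^sup>2 / (2 * c) + indicator {x\<^sub>0<..x} t * (c / 2) \<partial>lborel)"
  proof (rule integral_mono)
    show "integrable lborel (\<lambda>t. indicator {x\<^sub>0<..x} t * (- g t))"
      using is_weak_deriv_set_integrable[OF g] unfolding set_integrable_def by simp
    show "integrable lborel (\<lambda>t. (g t)\<^sup>2 / (2 * c) + indicator {x\<^sub>0<..x} t * (c / 2))"
      using sq \<open>x\<^sub>0 \<le> x\<close> by (intro Bochner_Integration.integrable_add) auto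
    fix t
    have "0 \<le> (g t + c)\<^sup>2 / (2 * c)" using \<open>c > 0\<close> by simp
    hence "- g t \<le> (g t)\<^sup>2 / (2 * c) + c / 2"
      using \<open>c > 0\<close> by (simp add: field_simps power2_eq_square)
    moreover have "0 \<le> (g t)\<^sup>2 / (2 * c)" using \<open>c > 0\<close> by simp
    ultimately show "indicator {x\<^sub>0<..x} t * (- g t) \<le> (g t)\<^sup>2 / (2 * c) + indicator {x\<^sub>0<..x} t * (c / 2)"
      by (auto simp: indicator_def)
  qed
  also have "\<dots> = (\<integral>t. (g t)\<^sup>2 \<partial>lborel) / (2 * c) + (x - x\<^sub>0) * c / 2"
    using sq \<open>x\<^sub>0 \<le> x\<close> by (subst Bochner_Integration.integral_add) auto
  finally show ?thesis .
qed

lemma cube_le_mass_mult_Dirichlet_integral: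
  assumes u: "u \<in> DM M" and "M > 0"
  shows "(u x\<^sub>0) ^ 3 \<le> 16 * M * (\<integral>x. (wderiv u x)\<^sup>2 \<partial>lborel)"
proof -
  note u_int = DM_D(1)[OF u] and u_nonneg = DM_D(2)[OF u] and mass = DM_D(3)[OF u]
    and g = DM_D(5)[OF u]
  define G where "G = (\<integral>x. (wderiv u x)\<^sup>2 \<partial>lborel)"
  define h where "h = u x\<^sub>0"
  have "G \<ge> 0" by (simp add: G_def)
  show ?thesis
  proof (cases "h > 0")
    case False
    hence "h = 0" using u_nonneg[of x\<^sub>0] by (simp add: h_def)
    thus ?thesis using \<open>G \<ge> 0\<close> \<open>M > 0\<close> by (simp add: h_def G_def)
  next
    case True
    define T where "T = 4 * M / h"
    have "T \<ge> 0" using True \<open>M > 0\<close> by (simp add: T_def)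
    have "(\<integral>x. u x \<partial>lborel) < h / 2 * T" using True \<open>M > 0\<close> by (simp add: mass T_def)
    hence "\<exists>x\<in>{x\<^sub>0..x\<^sub>0 + T}. u x \<le> h / 2"
      by (rule exists_le_if_integral_less[OF u_int u_nonneg \<open>T \<ge> 0\<close>])
    then obtain x where x: "x\<^sub>0 \<le> x" "x \<le> x\<^sub>0 + T" "u x \<le> h / 2" by auto
    \<comment> \<open>the AM-GM weight \<open>c\<close> balances the two terms of the drop estimate\<close>
    define c where "c = h\<^sup>2 / (8 * M)"
    have "c > 0" using True \<open>M > 0\<close> by (simp add: c_def)
    have "h / 2 \<le> h - u x" using x by simp
    also have "\<dots> \<le> G / (2 * c) + (x - x\<^sub>0) * c / 2"
      using is_weak_deriv_drop_le[OF g x(1) \<open>c > 0\<close>] by (simp add: G_def h_def)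
    also have "\<dots> \<le> G / (2 * c) + T * c / 2"
      using x \<open>c > 0\<close> by (simp add: divide_right_mono mult_right_mono)
    also have "T * c / 2 = h / 4"
      using True \<open>M > 0\<close> by (simp add: T_def c_def field_simps power2_eq_square)
    finally have "h / 4 * (2 * c) \<le> G" using \<open>c > 0\<close> by (simp add: field_simps)
    thus ?thesis using True \<open>M > 0\<close>
      by (simp add: c_def G_def h_def field_simps power2_eq_square power3_eq_cube)
  qed
qed

lemma energy_ge_Dirichlet_integral:
  fixes Q :: "real \<Rightarrow> real"
  assumes u: "u \<in> DM M" and [measurable]: "Q \<in> borel_measurable borel"
    and Q_ge: "\<forall>s\<ge>0. - c * s \<le> Q s"
  shows "ereal ((\<integral>x. (wderiv u x)\<^sup>2 \<partial>lborel) / 2 - c * M) \<le> energy Q u"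
proof -
  note u_int = DM_D(1)[OF u] and u_nonneg = DM_D(2)[OF u] and mass = DM_D(3)[OF u]
    and [measurable] = DM_D(4)[OF u] and g = DM_D(5)[OF u]
  have [measurable]: "wderiv u \<in> borel_measurable lborel" and sq: "integrable lborel (\<lambda>x. (wderiv u x)\<^sup>2)"
    using g by (auto simp: is_weak_deriv_def)
  have "ereal (\<integral>x. (wderiv u x)\<^sup>2 / 2 - c * u x \<partial>lborel) \<le> energy Q u"
    unfolding energy_def
    by (rule ext_integral_ge_integral) (use sq u_int u_nonneg Q_ge in auto)
  also have "(\<integral>x. (wderiv u x)\<^sup>2 / 2 - c * u x \<partial>lborel) = (\<integral>x. (wderiv u x)\<^sup>2 \<partial>lborel) / 2 - c * M"
    using sq u_int by (simp add: mass)
  finally show ?thesis .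
qed

lemma cube_le_if_energy_le:
  fixes Q :: "real \<Rightarrow> real"
  assumes u: "u \<in> DM M" and "M > 0" and "Q \<in> borel_measurable borel"
    and "\<forall>s\<ge>0. - c * s \<le> Q s" and "energy Q u \<le> ereal E"
  shows "(u x\<^sub>0) ^ 3 \<le> 16 * M * (2 * E + 2 * c * M)"
proof -
  define G where "G = (\<integral>x. (wderiv u x)\<^sup>2 \<partial>lborel)"
  have "ereal (G / 2 - c * M) \<le> energy Q u"
    unfolding G_def using assms by (intro energy_ge_Dirichlet_integral)
  also note \<open>energy Q u \<le> ereal E\<close>
  finally have "G \<le> 2 * E + 2 * c * M" by simp
  have "(u x\<^sub>0) ^ 3 \<le> 16 * M * G"
    unfolding G_def using u \<open>M > 0\<close> by (rule cube_le_mass_mult_Dirichlet_integral)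
  also have "\<dots> \<le> 16 * M * (2 * E + 2 * c * M)"
    using \<open>G \<le> 2 * E + 2 * c * M\<close> \<open>M > 0\<close> by (intro mult_left_mono) auto
  finally show ?thesis .
qed

section \<open>Bump test functions\<close>

definition bump :: "real \<Rightarrow> real \<Rightarrow> real" where
  "bump p t = (max 0 (t * (1 - t))) powr p"

definition bump_deriv :: "real \<Rightarrow> real \<Rightarrow> real" where
  "bump_deriv p t = indicator {0..1} t * (p * (1 - 2 * t) * (t * (1 - t)) powr (p - 1))"

lemma bump_measurable [measurable]: "bump p \<in> borel_measurable borel"
  unfolding bump_def by measurable

lemma bump_deriv_measurable [measurable]: "bump_deriv p \<in> borel_measurable borel"
  unfolding bump_deriv_def by measurable

lemma continuous_on_bump: "p > 0 \<Longrightarrow> continuous_on UNIV (bump p)"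
  unfolding bump_def by (intro continuous_on_powr') (auto intro!: continuous_intros)

lemma bump_eq_0: "t \<notin> {0<..<1} \<Longrightarrow> bump p t = 0"
proof -
  assume "t \<notin> {0<..<1}"
  hence "t * (1 - t) \<le> 0"
    by (cases "t \<le> 0") (auto simp: mult_nonpos_nonneg mult_nonneg_nonpos not_le)
  thus ?thesis by (simp add: bump_def max_def)
qed

lemma bump_eq: "t \<in> {0<..<1} \<Longrightarrow> bump p t = (t * (1 - t)) powr p"
  by (simp add: bump_def max_def)

lemma bump_nonneg: "bump p t \<ge> 0"
  by (simp add: bump_def)

lemma bump_le_1: "p > 0 \<Longrightarrow> bump p t \<le> 1"
proof -
  assume "p > 0"
  have "0 \<le> (t - 1/2)\<^sup>2" by simp
  hence "max 0 (t * (1 - t)) \<le> 1" by (simp add: power2_eq_square algebra_simps)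
  thus ?thesis unfolding bump_def using \<open>p > 0\<close> by (intro powr_le1) auto
qed

lemma has_real_derivative_bump:
  assumes "t \<notin> {0, 1}"
  shows "(bump p has_real_derivative bump_deriv p t) (at t)"
proof -
  consider "t \<in> {..<0} \<union> {1<..}" | "t \<in> {0<..<1}" using assms by fastforce
  thus ?thesis
  proof cases
    case 1
    have "bump_deriv p t = 0" using 1 by (auto simp: bump_deriv_def)
    moreover have "(bump p has_real_derivative 0) (at t)"
      by (rule has_field_derivative_transform_within_open[of "\<lambda>_. 0" _ _ "{..<0} \<union> {1<..}"])
         (use 1 in \<open>auto simp: bump_eq_0\<close>)
    ultimately show ?thesis by simp
  next
    case 2
    hence "t * (1 - t) > 0" by simp
    hence "((\<lambda>t. (t * (1 - t)) powr p) has_real_derivative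
            p * (t * (1 - t)) powr (p - of_nat 1) * (1 - 2 * t)) (at t)"
      by (rule DERIV_fun_powr[where g="\<lambda>t. t * (1 - t)", rotated]) (auto intro!: derivative_eq_intros)
    moreover have "p * (t * (1 - t)) powr (p - of_nat 1) * (1 - 2 * t) = bump_deriv p t"
      using 2 by (simp add: bump_deriv_def)
    ultimately have "((\<lambda>t. (t * (1 - t)) powr p) has_real_derivative bump_deriv p t) (at t)"
      by simp
    thus ?thesis
      by (rule has_field_derivative_transform_within_open[where S="{0<..<1}"])
         (use 2 in \<open>auto simp: bump_eq\<close>)
  qed
qed

lemma integrable_Beta_symmetric:
  fixes r :: real
  assumes "r > -1"
  shows "integrable lborel (\<lambda>t. indicator {0..1} t * (t * (1 - t)) powr r)"
proof -
  have "set_integrable lborel {0..1} (\<lambda>t. t powr ((r + 1) - 1) * (1 - t) powr ((r + 1) - 1))"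
    using assms by (intro integrable_Beta) auto
  thus ?thesis unfolding set_integrable_def by (simp add: powr_mult)
qed

lemma integrable_bump_deriv_square:
  assumes "p > 1/2"
  shows "integrable lborel (\<lambda>t. (bump_deriv p t)\<^sup>2)"
proof (rule Bochner_Integration.integrable_bound)
  show "integrable lborel (\<lambda>t. p\<^sup>2 * (indicator {0..1} t * (t * (1 - t)) powr (2 * p - 2)))"
    using assms by (intro integrable_mult_right integrable_Beta_symmetric) auto
  show "AE t in lborel. norm ((bump_deriv p t)\<^sup>2)
          \<le> norm (p\<^sup>2 * (indicator {0..1} t * (t * (1 - t)) powr (2 * p - 2)))"
  proof (rule AE_I2)
    fix t :: real
    show "norm ((bump_deriv p t)\<^sup>2) \<le> norm (p\<^sup>2 * (indicator {0..1} t * (t * (1 - t)) powr (2 * p - 2)))"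
    proof (cases "t \<in> {0..1}")
      case True
      have "((t * (1 - t)) powr (p - 1))\<^sup>2 = (t * (1 - t)) powr (2 * p - 2)"
        by (simp add: power2_eq_square algebra_simps flip: powr_add)
      moreover have "(1 - 2 * t)\<^sup>2 \<le> 1"
      proof -
        have "(1 - 2 * t)\<^sup>2 = 1 - 4 * (t * (1 - t))" by (simp add: power2_eq_square algebra_simps)
        thus ?thesis using True by simp
      qed
      moreover have "p\<^sup>2 * (1 - 2 * t)\<^sup>2 \<le> p\<^sup>2"
        using \<open>(1 - 2 * t)\<^sup>2 \<le> 1\<close> by (intro mult_left_le) auto
      ultimately have "(bump_deriv p t)\<^sup>2 \<le> p\<^sup>2 * (t * (1 - t)) powr (2 * p - 2)"
        using True unfolding bump_deriv_def power_mult_distrib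
        by (auto intro: mult_right_mono)
      thus ?thesis using True by simp
    qed (simp add: bump_deriv_def)
  qed
qed simp

lemma integrable_bump: "p > 0 \<Longrightarrow> integrable lborel (bump p)"
proof (rule Bochner_Integration.integrable_bound)
  assume "p > 0"
  show "integrable lborel (indicator {0..1} :: real \<Rightarrow> real)"
    by (intro integrable_real_indicator) auto
  show "AE x in lborel. norm (bump p x) \<le> norm (indicator {0..1} x :: real)"
    using bump_le_1[OF \<open>p > 0\<close>] bump_eq_0[of _ p] bump_nonneg[of p]
    by (intro AE_I2) (auto simp: indicator_def)
qed simp

lemma integral_bump_pos: "p > 0 \<Longrightarrow> (\<integral>t. bump p t \<partial>lborel) > 0"
proof -
  assume "p > 0"
  define c where "c = (3/16 :: real) powr p"
  have "c > 0" by (simp add: c_def)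
  have "c / 2 = (\<integral>t. indicator {1/4..3/4::real} t * c \<partial>lborel)"
    by simp
  also have "\<dots> \<le> (\<integral>t. bump p t \<partial>lborel)"
  proof (rule integral_mono)
    show "integrable lborel (\<lambda>t. indicator {1/4..3/4::real} t * c)"
      by (intro integrable_mult_left integrable_real_indicator) (auto simp: less_top[symmetric] inverse_ennreal)
    show "integrable lborel (bump p)" using \<open>p > 0\<close> by (rule integrable_bump)
    fix t :: real
    show "indicator {1/4..3/4::real} t * c \<le> bump p t"
    proof (cases "t \<in> {1/4..3/4}")
      case True
      have "(3/4 - t) * (t - 1/4) = t * (1 - t) - 3/16" by algebra
      moreover have "0 \<le> (3/4 - t) * (t - 1/4)" using True by auto
      ultimately have "3/16 \<le> t * (1 - t)" by linarith
      hence "c \<le> (t * (1 - t)) powr p" unfolding c_def using \<open>p > 0\<close> by (intro powr_mono2) auto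
      thus ?thesis using True by (simp add: bump_eq)
    qed (simp add: bump_nonneg)
  qed
  finally show ?thesis using \<open>c > 0\<close> by linarith
qed

lemma bump_square: "(bump p t)\<^sup>2 = bump (2 * p) t"
  by (simp add: bump_def power2_eq_square flip: powr_add)

lemma integrable_lborel_rescale:
  fixes F :: "real \<Rightarrow> real"
  assumes "integrable lborel F" "l > 0"
  shows "integrable lborel (\<lambda>x. F (x / l))"
  using lborel_integrable_real_affine[OF assms(1), of "1 / l" 0] assms(2) by simp

lemma integral_lborel_rescale:
  fixes F :: "real \<Rightarrow> real"
  assumes "l > 0"
  shows "(\<integral>x. F (x / l) \<partial>lborel) = l * (\<integral>x. F x \<partial>lborel)"
  using lborel_integral_real_affine[of l "\<lambda>x. F (x / l)" 0] assms by simp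

definition scaled_bump :: "real \<Rightarrow> real \<Rightarrow> real \<Rightarrow> real \<Rightarrow> real" where
  "scaled_bump p a l x = a * bump p (x / l)"

lemma scaled_bump_measurable [measurable]: "scaled_bump p a l \<in> borel_measurable borel"
  unfolding scaled_bump_def by measurable

lemma is_weak_deriv_scaled_bump:
  assumes "1/2 < p" and "l > 0"
  shows "is_weak_deriv (scaled_bump p a l) (\<lambda>x. a / l * bump_deriv p (x / l))"
proof (rule is_weak_derivI[where S="{0, l}"])
  show "continuous_on UNIV (scaled_bump p a l)"
    unfolding scaled_bump_def using assms
    by (intro continuous_intros continuous_on_compose2[OF continuous_on_bump[of p]]) auto
  fix x :: real assume "x \<notin> {0, l}"
  hence "x / l \<notin> {0, 1}" using \<open>l > 0\<close> by auto
  hence "((\<lambda>x. bump p (x / l)) has_real_derivative bump_deriv p (x / l) * (1 / l)) (at x)"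
    by (intro DERIV_chain2[OF has_real_derivative_bump]) (auto intro!: derivative_eq_intros)
  thus "(scaled_bump p a l has_real_derivative a / l * bump_deriv p (x / l)) (at x)"
    unfolding scaled_bump_def[abs_def] using DERIV_cmult by fastforce
next
  show "(\<lambda>x. a / l * bump_deriv p (x / l)) \<in> borel_measurable lborel" by measurable
  show "integrable lborel (\<lambda>x. (a / l * bump_deriv p (x / l))\<^sup>2)"
    unfolding power_mult_distrib using assms
    by (intro integrable_mult_right integrable_lborel_rescale[where F="\<lambda>t. (bump_deriv p t)\<^sup>2"]
        integrable_bump_deriv_square)
qed simp

lemma scaled_bump_in_DM:
  assumes "1/2 < p" and "a \<ge> 0" and "l > 0"
  shows "scaled_bump p a l \<in> DM (a * l * (\<integral>t. bump p t \<partial>lborel))"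
proof -
  have int: "integrable lborel (scaled_bump p a l)"
    unfolding scaled_bump_def[abs_def] using assms
    by (intro integrable_mult_right integrable_lborel_rescale integrable_bump) auto
  have "integrable lborel (\<lambda>x. (scaled_bump p a l x)\<^sup>2)"
    unfolding scaled_bump_def power_mult_distrib bump_square using assms
    by (intro integrable_mult_right integrable_lborel_rescale[where F="bump (2 * p)"] integrable_bump) auto
  hence "scaled_bump p a l \<in> H1"
    unfolding H1_def using is_weak_deriv_scaled_bump[OF assms(1,3)] by auto
  moreover have "(\<integral>x. scaled_bump p a l x \<partial>lborel) = a * l * (\<integral>t. bump p t \<partial>lborel)"
    unfolding scaled_bump_def using integral_lborel_rescale[OF \<open>l > 0\<close>, of "bump p"] by simp
  moreover have "scaled_bump p a l x \<ge> 0" for x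
    using \<open>a \<ge> 0\<close> by (simp add: scaled_bump_def bump_nonneg)
  ultimately show ?thesis
    using int by (simp add: DM_def)
qed

lemma energy_scaled_bump_le:
  fixes Q :: "real \<Rightarrow> real"
  assumes p: "1/2 < p" "-1 < p * q" and "a > 0" "l > 0"
    and [measurable]: "Q \<in> borel_measurable borel" and "Q 0 = 0"
    and Q_le: "\<forall>s. 0 < s \<and> s \<le> a \<longrightarrow> Q s \<le> K * s powr q"
  shows "energy Q (scaled_bump p a l) \<le>
    ereal (a\<^sup>2 / l * (\<integral>t. (bump_deriv p t)\<^sup>2 \<partial>lborel) / 2
           + K * a powr q * l * (\<integral>t. indicator {0..1} t * (t * (1 - t)) powr (p * q) \<partial>lborel))"
proof -
  define v where "v = scaled_bump p a l"
  define \<phi> where "\<phi> x = a / l * bump_deriv p (x / l)" for x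
  define B where "B t = indicator {0..1} t * (t * (1 - t)) powr (p * q)" for t :: real
  have [measurable]: "v \<in> borel_measurable borel" "\<phi> \<in> borel_measurable borel" "B \<in> borel_measurable borel"
    unfolding v_def \<phi>_def[abs_def] B_def[abs_def] by measurable
  have "v \<in> H1" using scaled_bump_in_DM[OF p(1) _ \<open>l > 0\<close>, of a] \<open>a > 0\<close> by (simp add: v_def DM_def)
  hence wd: "is_weak_deriv v (wderiv v)" by (rule is_weak_deriv_wderiv)
  have [measurable]: "wderiv v \<in> borel_measurable lborel" using wd by (simp add: is_weak_deriv_def)
  have "AE x in lborel. wderiv v x = \<phi> x"
    using wd is_weak_deriv_scaled_bump[OF p(1) \<open>l > 0\<close>, of a] unfolding \<phi>_def[abs_def] v_def
    by (rule is_weak_deriv_AE_unique)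
  moreover have "Q (v x) \<le> K * a powr q * B (x / l)" for x
  proof (cases "x / l \<in> {0<..<1}")
    case True
    define t where "t = x / l"
    have "0 < t" "t < 1" using True by (auto simp: t_def)
    hence "t * (1 - t) > 0" by simp
    have v_eq: "v x = a * (t * (1 - t)) powr p"
      using True by (simp add: v_def scaled_bump_def bump_eq t_def)
    have "0 < v x" unfolding v_eq using \<open>a > 0\<close> \<open>t * (1 - t) > 0\<close> by (intro mult_pos_pos) auto
    moreover have "v x \<le> a"
      using bump_le_1[of p "x / l"] p \<open>a > 0\<close> by (simp add: v_def scaled_bump_def mult_left_le)
    ultimately have "Q (v x) \<le> K * (v x) powr q" using Q_le by blast
    also have "(v x) powr q = a powr q * (t * (1 - t)) powr (p * q)"
      using \<open>a > 0\<close> \<open>t * (1 - t) > 0\<close> by (simp add: v_eq powr_mult powr_powr)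
    finally show ?thesis using True by (simp add: B_def t_def mult_ac)
  next
    case False
    hence "v x = 0" by (simp add: v_def scaled_bump_def bump_eq_0)
    moreover have "B (x / l) = 0" using False p by (auto simp: B_def indicator_def)
    ultimately show ?thesis using \<open>Q 0 = 0\<close> by simp
  qed
  ultimately have "AE x in lborel. (wderiv v x)\<^sup>2 / 2 + Q (v x) \<le> (\<phi> x)\<^sup>2 / 2 + K * a powr q * B (x / l)"
    by (auto elim!: eventually_mono)
  moreover have sq: "integrable lborel (\<lambda>x. (\<phi> x)\<^sup>2)"
    using wd is_weak_deriv_scaled_bump[OF p(1) \<open>l > 0\<close>, of a] by (simp add: is_weak_deriv_def \<phi>_def)
  moreover have B: "integrable lborel B"
    unfolding B_def using p by (intro integrable_Beta_symmetric) simp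
  ultimately have "energy Q v \<le> ereal (\<integral>x. (\<phi> x)\<^sup>2 / 2 + K * a powr q * B (x / l) \<partial>lborel)"
    unfolding energy_def using \<open>l > 0\<close>
    by (intro ext_integral_le_integral) (auto intro!: integrable_lborel_rescale)
  also have "(\<integral>x. (\<phi> x)\<^sup>2 / 2 + K * a powr q * B (x / l) \<partial>lborel) =
      (\<integral>x. (\<phi> x)\<^sup>2 \<partial>lborel) / 2 + K * a powr q * (\<integral>x. B (x / l) \<partial>lborel)"
    using sq integrable_lborel_rescale[OF B \<open>l > 0\<close>] by simp
  also have "(\<integral>x. (\<phi> x)\<^sup>2 \<partial>lborel) = (a / l)\<^sup>2 * (l * (\<integral>t. (bump_deriv p t)\<^sup>2 \<partial>lborel))"
    unfolding \<phi>_def power_mult_distrib integral_mult_right_zero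
    by (rule arg_cong[OF integral_lborel_rescale[OF \<open>l > 0\<close>]])
  also have "(\<integral>x. B (x / l) \<partial>lborel) = l * (\<integral>t. B t \<partial>lborel)"
    by (rule integral_lborel_rescale[OF \<open>l > 0\<close>])
  finally show ?thesis
    using \<open>l > 0\<close> by (simp add: v_def B_def power2_eq_square mult_ac)
qed

lemma minimizer_energy_le_powr:
  fixes Q :: "real \<Rightarrow> real"
  assumes p: "1/2 < p" "-1 < p * q" and "q < 4"
    and [measurable]: "Q \<in> borel_measurable borel" and "Q 0 = 0"
    and Q_le: "\<forall>s. 0 < s \<and> s < s\<^sub>1 \<longrightarrow> Q s \<le> K * s powr q"
  obtains C where "\<And>M u. is_minimizer Q M u \<Longrightarrow> 0 < M \<Longrightarrow> M powr (2 / (4 - q)) < s\<^sub>1 \<Longrightarrow>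
    energy Q u \<le> ereal (C * M powr ((2 + q) / (4 - q)))"
proof -
  define I where "I = (\<integral>t. bump p t \<partial>lborel)"
  define J where "J = (\<integral>t. (bump_deriv p t)\<^sup>2 \<partial>lborel)"
  define B where "B = (\<integral>t. indicator {0..1} t * (t * (1 - t)) powr (p * q) \<partial>lborel)"
  define \<beta> where "\<beta> = 2 / (4 - q)"
  define \<kappa> where "\<kappa> = (2 + q) / (4 - q)"
  have "I > 0" unfolding I_def using p by (intro integral_bump_pos) auto
  \<comment> \<open>the exponent \<open>\<beta>\<close> balances the Dirichlet and the potential part of the energy\<close>
  have \<kappa>_eq: "3 * \<beta> - 1 = \<kappa>" "\<beta> * (q - 1) + 1 = \<kappa>"
    using \<open>q < 4\<close> by (simp_all add: \<beta>_def \<kappa>_def field_simps)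
  have "energy Q u \<le> ereal ((I * J / 2 + K * B / I) * M powr \<kappa>)"
    if min: "is_minimizer Q M u" and "0 < M" and small: "M powr \<beta> < s\<^sub>1" for M u
  proof -
    define a where "a = M powr \<beta>"
    define l where "l = M / (a * I)"
    have "a > 0" "l > 0" using \<open>0 < M\<close> \<open>I > 0\<close> by (simp_all add: a_def l_def)
    have "a * l * I = M" using \<open>a > 0\<close> \<open>I > 0\<close> by (simp add: l_def)
    hence "scaled_bump p a l \<in> DM M"
      using scaled_bump_in_DM[OF p(1) _ \<open>l > 0\<close>, of a] \<open>a > 0\<close> by (simp add: I_def)
    have Dirichlet: "a\<^sup>2 / l = I * M powr \<kappa>"
    proof -
      have "a\<^sup>2 / l = I * (a powr 3 * M powr (- 1))"
        using \<open>a > 0\<close> \<open>0 < M\<close> \<open>I > 0\<close>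
        by (simp add: l_def powr_minus_divide field_simps power2_eq_square power3_eq_cube flip: powr_realpow)
      also have "a powr 3 * M powr (- 1) = M powr (\<beta> * 3 + - 1)"
        unfolding a_def powr_powr by (rule powr_add[symmetric])
      finally show ?thesis
        unfolding \<kappa>_eq(1)[symmetric] by (simp add: algebra_simps)
    qed
    have potential: "a powr q * l = M powr \<kappa> / I"
    proof -
      have "a powr q * l = a powr (q - 1) * M powr 1 / I"
        using \<open>a > 0\<close> \<open>0 < M\<close> by (simp add: l_def powr_diff)
      also have "a powr (q - 1) * M powr 1 = M powr (\<beta> * (q - 1) + 1)"
        unfolding a_def powr_powr by (rule powr_add[symmetric])
      finally show ?thesis
        unfolding \<kappa>_eq(2)[symmetric] .
    qed
    have "energy Q u \<le> energy Q (scaled_bump p a l)"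
      using min \<open>scaled_bump p a l \<in> DM M\<close> by (simp add: is_minimizer_def)
    also have "\<dots> \<le> ereal (a\<^sup>2 / l * J / 2 + K * B * (a powr q * l))"
      using energy_scaled_bump_le[OF p \<open>a > 0\<close> \<open>l > 0\<close>, of Q K] Q_le small \<open>Q 0 = 0\<close>
      by (simp add: a_def J_def B_def mult_ac)
    also have "a\<^sup>2 / l * J / 2 + K * B * (a powr q * l) = (I * J / 2 + K * B / I) * M powr \<kappa>"
      unfolding Dirichlet potential by (simp add: algebra_simps)
    finally show ?thesis .
  qed
  thus thesis using that unfolding \<beta>_def \<kappa>_def by blast
qed

section \<open>Small masses\<close>

lemma asymp_equiv_imp_eventually_between:
  fixes f g :: "'a \<Rightarrow> real"
  assumes "f \<sim>[F] g" and "eventually (\<lambda>x. g x > 0) F"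
  shows "eventually (\<lambda>x. 0 \<le> f x \<and> f x \<le> 2 * g x) F"
proof -
  have "((\<lambda>x. f x / g x) \<longlongrightarrow> 1) F"
    by (rule asymp_equivD_strong[OF assms(1)]) (use assms(2) in \<open>auto elim: eventually_mono\<close>)
  hence "eventually (\<lambda>x. f x / g x \<in> {0<..<2}) F"
    by (intro topological_tendstoD) auto
  with assms(2) show ?thesis
    by eventually_elim (auto simp: field_simps)
qed

lemma linear_lower_bound_if_nonneg_near_0:
  fixes Q :: "real \<Rightarrow> real"
  assumes "bdd_below (range Q)" and "s\<^sub>0 > 0" and "\<forall>s. 0 \<le> s \<and> s < s\<^sub>0 \<longrightarrow> 0 \<le> Q s"
  obtains c where "c \<ge> 0" "\<forall>s\<ge>0. - c * s \<le> Q s"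
proof -
  obtain L where L: "\<And>s. L \<le> Q s" using assms(1) by (auto simp: bdd_below_def)
  define c where "c = max 0 (- L) / s\<^sub>0"
  have "c \<ge> 0" using assms(2) by (simp add: c_def)
  moreover have "- c * s \<le> Q s" if "s \<ge> 0" for s
  proof (cases "s < s\<^sub>0")
    case True
    have "0 \<le> c * s" using \<open>c \<ge> 0\<close> \<open>s \<ge> 0\<close> by simp
    moreover have "0 \<le> Q s" using assms(3) True \<open>s \<ge> 0\<close> by blast
    ultimately show ?thesis by linarith
  next
    case False
    have "max 0 (- L) = c * s\<^sub>0" using assms(2) by (simp add: c_def)
    also have "\<dots> \<le> c * s" using False \<open>c \<ge> 0\<close> by (intro mult_left_mono) auto
    finally show ?thesis using L[of s] by linarith
  qed
  ultimately show thesis using that by blast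
qed

lemma borel_measurable_if_continuous_on_pos:
  fixes Q :: "real \<Rightarrow> real"
  assumes "continuous_on {0<..} Q" and "\<forall>s\<le>0. Q s = 0"
  shows "Q \<in> borel_measurable borel"
proof -
  have "Q = (\<lambda>s. if s \<in> {0<..} then Q s else 0)"
    using assms(2) by (auto simp: fun_eq_iff not_less)
  also have "\<dots> \<in> borel_measurable borel"
    by (rule borel_measurable_continuous_on_if) (auto intro: assms(1))
  finally show ?thesis .
qed

lemma potential_bounds_near_0:
  fixes Q :: "real \<Rightarrow> real"
  assumes "\<forall>s>0. Q differentiable (at s)" and "\<forall>s\<le>0. Q s = 0" and "bdd_below (range Q)"
    and "Q \<sim>[at_right 0] (\<lambda>s. A * s powr q)" and "A > 0"
  obtains s\<^sub>1 c where "Q \<in> borel_measurable borel" and "s\<^sub>1 > 0"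
    and "\<forall>s. 0 < s \<and> s < s\<^sub>1 \<longrightarrow> Q s \<le> (2 * A) * s powr q" and "\<forall>s\<ge>0. - c * s \<le> Q s"
proof -
  have "continuous_on {0<..} Q"
    using assms(1) by (intro continuous_at_imp_continuous_on) (auto intro: differentiable_imp_continuous_within)
  hence "Q \<in> borel_measurable borel"
    using assms(2) by (rule borel_measurable_if_continuous_on_pos)
  have "eventually (\<lambda>s. 0 \<le> Q s \<and> Q s \<le> 2 * (A * s powr q)) (at_right 0)"
    using assms(4,5)
    by (intro asymp_equiv_imp_eventually_between) (auto simp: eventually_at_right_less
         intro: eventually_mono[OF eventually_at_right_less])
  then obtain s\<^sub>1 where "s\<^sub>1 > 0" and near_0: "\<forall>s. 0 < s \<and> s < s\<^sub>1 \<longrightarrow> 0 \<le> Q s \<and> Q s \<le> (2 * A) * s powr q"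
    unfolding eventually_at_right_field mult.assoc[symmetric] by blast
  have "\<forall>s. 0 \<le> s \<and> s < s\<^sub>1 \<longrightarrow> 0 \<le> Q s"
    using near_0 assms(2) by (metis order_le_less order_refl)
  then obtain c where "\<forall>s\<ge>0. - c * s \<le> Q s"
    by (rule linear_lower_bound_if_nonneg_near_0[OF assms(3) \<open>s\<^sub>1 > 0\<close>])
  with that \<open>Q \<in> borel_measurable borel\<close> \<open>s\<^sub>1 > 0\<close> near_0 show thesis by blast
qed

lemma tendsto_powr_at_right_0: "e > 0 \<Longrightarrow> ((\<lambda>x::real. x powr e) \<longlongrightarrow> 0) (at_right 0)"
  by (rule tendsto_zero_powrI[OF tendsto_ident_at tendsto_const])
     (auto simp: eventually_at_right_less intro: eventually_mono[OF eventually_at_right_less])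

lemma tendsto_0_if_cube_le:
  fixes f g :: "'a \<Rightarrow> real"
  assumes "eventually (\<lambda>x. 0 \<le> f x) F" and "eventually (\<lambda>x. f x ^ 3 \<le> g x) F"
    and "(g \<longlongrightarrow> 0) F"
  shows "(f \<longlongrightarrow> 0) F"
proof (rule tendsto_sandwich[OF assms(1) _ tendsto_const])
  show "eventually (\<lambda>x. f x \<le> root 3 (g x)) F"
    using assms(1,2)
  proof eventually_elim
    case (elim x)
    have "root 3 (f x ^ 3) \<le> root 3 (g x)" using elim(2) by simp
    thus ?case using elim(1) by (simp add: real_root_power_cancel)
  qed
  show "((\<lambda>x. root 3 (g x)) \<longlongrightarrow> 0) F"
    using tendsto_real_root[OF assms(3), of 3] by simp
qed

theorem mainTheorem15:
  fixes Q :: "real \<Rightarrow> real" and A m :: real and uM :: "real \<Rightarrow> real \<Rightarrow> real"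
  assumes Q_C1: "\<forall>s>0. Q differentiable (at s)" "continuous_on {0<..} (deriv Q)"
    and Q_neg: "\<forall>s\<le>0. Q s = 0"
    and Q_bdd: "bdd_below (range Q)"
    and Q_asymp: "Q \<sim>[at_right 0] (\<lambda>s. A * s powr (1 - m))"
    and A_pos: "A > 0" and m_range: "1 < m" "m < 3"
    and Q_deriv_bound: "\<exists>C \<epsilon>. \<epsilon> > 0 \<and> (\<forall>s. 0 < s \<and> s < \<epsilon> \<longrightarrow> \<bar>s * deriv Q s\<bar> \<le> C * Q s)"
    and H_R: "\<exists>\<delta>. 0 < \<delta> \<and> \<delta> < 1 \<and>
               (\<forall>s. (0 < s \<and> s < \<delta>) \<or> s > 1 / \<delta> \<longrightarrow> deriv (\<lambda>t. Q t / t) s \<noteq> 0)"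
    and minim: "\<forall>M>0. is_minimizer Q M (uM M)"
    and even: "\<forall>M>0. \<forall>x. uM M (- x) = uM M x"
  shows "((\<lambda>M. uM M 0) \<longlongrightarrow> 0) (at_right 0)"
proof -
  obtain s\<^sub>1 c where Q_meas: "Q \<in> borel_measurable borel" and "s\<^sub>1 > 0"
    and Q_le: "\<forall>s. 0 < s \<and> s < s\<^sub>1 \<longrightarrow> Q s \<le> (2 * A) * s powr (1 - m)" and Q_ge: "\<forall>s\<ge>0. - c * s \<le> Q s"
    using potential_bounds_near_0[OF Q_C1(1) Q_neg Q_bdd Q_asymp A_pos] by blast
  have p: "1/2 < 2 / (m + 1)" "-1 < 2 / (m + 1) * (1 - m)" and "1 - m < 4"
    using m_range by (auto simp: field_simps)
  have "Q 0 = 0" using Q_neg by simp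
  obtain C where energy_le: "\<And>M u. is_minimizer Q M u \<Longrightarrow> 0 < M \<Longrightarrow> M powr (2 / (4 - (1 - m))) < s\<^sub>1 \<Longrightarrow>
      energy Q u \<le> ereal (C * M powr ((2 + (1 - m)) / (4 - (1 - m))))"
    using minimizer_energy_le_powr[OF p \<open>1 - m < 4\<close> Q_meas \<open>Q 0 = 0\<close> Q_le] by blast
  define \<kappa> where "\<kappa> = (2 + (1 - m)) / (4 - (1 - m))"
  have "\<kappa> > 0" using m_range by (simp add: \<kappa>_def)
  have "eventually (\<lambda>M. M powr (2 / (4 - (1 - m))) < s\<^sub>1) (at_right 0)"
    using m_range \<open>s\<^sub>1 > 0\<close> by (intro order_tendstoD(2)[OF tendsto_powr_at_right_0]) auto
  hence cube_le: "eventually (\<lambda>M. uM M 0 ^ 3 \<le> 16 * M * (2 * (C * M powr \<kappa>) + 2 * c * M)) (at_right 0)"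
    using eventually_at_right_less[of 0]
  proof eventually_elim
    case (elim M)
    have min: "is_minimizer Q M (uM M)" using minim elim by blast
    have "uM M \<in> DM M" using min by (simp add: is_minimizer_def)
    moreover have "energy Q (uM M) \<le> ereal (C * M powr \<kappa>)"
      unfolding \<kappa>_def by (rule energy_le[OF min elim(2,1)])
    ultimately show ?case by (rule cube_le_if_energy_le[OF _ elim(2) Q_meas Q_ge])
  qed
  have "((\<lambda>M. 16 * M * (2 * (C * M powr \<kappa>) + 2 * c * M)) \<longlongrightarrow> 16 * 0 * (2 * (C * 0) + 2 * c * 0))
      (at_right 0)"
    by (intro tendsto_mult tendsto_add tendsto_const tendsto_ident_at tendsto_powr_at_right_0 \<open>\<kappa> > 0\<close>)
  hence bound_to_0: "((\<lambda>M. 16 * M * (2 * (C * M powr \<kappa>) + 2 * c * M)) \<longlongrightarrow> 0) (at_right 0)"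
    by simp
  have "eventually (\<lambda>M. 0 \<le> uM M 0) (at_right 0)"
    using eventually_at_right_less[of 0]
    by eventually_elim (use minim DM_D(2) in \<open>auto simp: is_minimizer_def\<close>)
  thus ?thesis
    using cube_le bound_to_0 by (rule tendsto_0_if_cube_le)
qed

end
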